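(* Let $r,\kappa,\eta>0$, $L\ge 0$, $S>L$, $V>0$, and let $m_1,m_2\ge 3$ be integers. Set $\Delta s=(S-L)/(m_1+1)$, $\Delta v=V/(m_2+1)$, $s_i=L+i\Delta s$ ($1\le i\le m_1$), $v_j=j\Delta v$ ($1\le j\le m_2$), $D_1=\mathrm{diag}(s_1,\dots,s_{m_1})$, $D_2=\mathrm{diag}(v_1,\dots,v_{m_2})$, $L_1=\frac{1}{2\Delta s}\,\mathrm{tridiag}(-1,0,1)$ (an $m_1\times m_1$ matrix) and $L_2=\frac{1}{2\Delta v}\,\mathrm{tridiag}(-1,0,1)$ (an $m_2\times m_2$ matrix). Define the real $m_1m_2\times m_1m_2$ matrices \[ A_1=r\,I\otimes(D_1L_1),\qquad A_2=\kappa\,[(\eta I-D_2)L_2]\otimes I . \] Then for all $t\ge 0$, \[ \|e^{tA_1}\|_2\le e^{t r/2}\quad\text{and}\quad \|e^{tA_2}\|_2\le e^{t\kappa/2}. \] Moreover, the values $\omega=r/2$ and $\omega=\kappa/2$ are the smallest values of $\omega$ for which the respective bounds $\|e^{tA_1}\|_2\le e^{t\omega}$, $\|e^{tA_2}\|_2\le e^{t\omega}$ (for all $t\ge0$) hold uniformly in the mesh widths, i.e. for all admissible $m_1,m_2$.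
   Context: $\otimes$ denotes the Kronecker product, $I$ the identity matrix of the appropriate dimension, and $\|\cdot\|_2$ the spectral norm (matrix norm induced by the Euclidean norm). $\mathrm{tridiag}(a,b,c)$ denotes the tridiagonal matrix with constant subdiagonal $a$, diagonal $b$ and superdiagonal $c$. *)

theory Defs
  imports Complex_Main "Jordan_Normal_Form.Matrix"
begin

text \<open>Real matrices are JNF matrices (explicit dimensions). Indices are 0-based.\<close>

definition tridiag :: "nat \<Rightarrow> real \<Rightarrow> real \<Rightarrow> real \<Rightarrow> real mat" where
  "tridiag m a b c = mat m m (\<lambda>(i,j). if i = j + 1 then a else if i = j then b
                                      else if j = i + 1 then c else 0)"

definition kron :: "real mat \<Rightarrow> real mat \<Rightarrow> real mat" where
  "kron A B = mat (dim_row A * dim_row B) (dim_col A * dim_col B)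
     (\<lambda>(i,j). A $$ (i div dim_row B, j div dim_col B) * B $$ (i mod dim_row B, j mod dim_col B))"

definition mat_exp :: "real mat \<Rightarrow> real mat" where
  "mat_exp A = mat (dim_row A) (dim_col A) (\<lambda>(i,j). \<Sum>k. (A ^\<^sub>m k) $$ (i,j) / fact k)"

definition vnorm2 :: "real vec \<Rightarrow> real" where
  "vnorm2 x = sqrt (\<Sum>i<dim_vec x. (x $ i)\<^sup>2)"

definition spec_norm :: "real mat \<Rightarrow> real" where
  "spec_norm A = Sup {vnorm2 (A *\<^sub>v x) | x. x \<in> carrier_vec (dim_col A) \<and> vnorm2 x = 1}"

definition A1_mat :: "real \<Rightarrow> real \<Rightarrow> real \<Rightarrow> nat \<Rightarrow> nat \<Rightarrow> real mat" where
  "A1_mat r L S m1 m2 =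
     (let ds = (S - L) / real (m1 + 1);
          D1 = mat_diag m1 (\<lambda>i. L + real (i + 1) * ds);
          L1 = (1 / (2 * ds)) \<cdot>\<^sub>m tridiag m1 (-1) 0 1
      in r \<cdot>\<^sub>m kron (1\<^sub>m m2) (D1 * L1))"

definition A2_mat :: "real \<Rightarrow> real \<Rightarrow> real \<Rightarrow> nat \<Rightarrow> nat \<Rightarrow> real mat" where
  "A2_mat \<kappa> \<eta> V m1 m2 =
     (let dv = V / real (m2 + 1);
          D2 = mat_diag m2 (\<lambda>j. real (j + 1) * dv);
          L2 = (1 / (2 * dv)) \<cdot>\<^sub>m tridiag m2 (-1) 0 1
      in \<kappa> \<cdot>\<^sub>m kron ((\<eta> \<cdot>\<^sub>m 1\<^sub>m m2 - D2) * L2) (1\<^sub>m m1))"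

end

theory Submission
  imports Defs
begin

text \<open>
  Each matrix is a multiple of a Kronecker product of an identity with
  \<open>diag(c) \<cdot> tridiag(-1,0,1)\<close>, whose weights form an arithmetic progression: step \<open>1/2\<close>
  (\<open>c\<^sub>i = s\<^sub>i / (2\<Delta>s)\<close>) for \<open>A\<^sub>1\<close> and step \<open>-1/2\<close> (\<open>c\<^sub>j = (\<eta> - v\<^sub>j) / (2\<Delta>v)\<close>) for \<open>A\<^sub>2\<close>.
  Summation by parts turns the quadratic form of \<open>diag(c) \<cdot> tridiag(-1,0,1)\<close> into
  \<open>\<Sum> (c\<^sub>i - c\<^sub>i\<^sub>+\<^sub>1) x\<^sub>i x\<^sub>i\<^sub>+\<^sub>1\<close>, hence \<open>\<langle>x, A x\<rangle> \<le> \<mu> \<parallel>x\<parallel>\<^sup>2\<close> with \<open>\<mu> = r/2\<close> resp. \<open>\<mu> = \<kappa>/2\<close>.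

  Such a bound on the numerical range gives \<open>\<parallel>e\<^sup>t\<^sup>A\<parallel> \<le> e\<^sup>t\<^sup>\<mu>\<close>, because
  \<open>d/dt \<parallel>e\<^sup>t\<^sup>A x\<parallel>\<^sup>2 = 2 \<langle>e\<^sup>t\<^sup>A x, A e\<^sup>t\<^sup>A x\<rangle>\<close> (a Gronwall argument). Conversely, if
  \<open>\<langle>x, A x\<rangle> > \<omega>\<close> for a unit vector \<open>x\<close>, the same derivative at \<open>t = 0\<close> shows
  \<open>\<parallel>e\<^sup>t\<^sup>A x\<parallel> > e\<^sup>t\<^sup>\<omega>\<close> for small \<open>t > 0\<close>. Normalised alternating resp. constant sign vectors
  attain \<open>\<langle>x, A x\<rangle> = \<mu> (1 - 1/m)\<close>, which exceeds any \<open>\<omega> < \<mu>\<close> on fine enough grids.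
\<close>

section \<open>The matrix exponential as a function of time\<close>

lemma pow_mat_Suc_left: "A \<in> carrier_mat n n \<Longrightarrow> A ^\<^sub>m Suc k = A * A ^\<^sub>m k"
proof (induction k)
  case 0
  then show ?case by simp
next
  case (Suc k)
  have "A ^\<^sub>m Suc (Suc k) = (A * A ^\<^sub>m k) * A" using Suc by simp
  also have "\<dots> = A * (A ^\<^sub>m k * A)" using Suc.prems by (simp add: assoc_mult_mat[of _ n n _ n _ n])
  finally show ?case by simp
qed

lemma index_pow_mat_smult:
  fixes A :: "real mat"
  assumes A: "A \<in> carrier_mat n n" and ij: "i < n" "j < n"
  shows "((t \<cdot>\<^sub>m A) ^\<^sub>m k) $$ (i,j) = t ^ k * (A ^\<^sub>m k) $$ (i,j)"
  using ij
proof (induction k arbitrary: i j)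
  case 0
  then show ?case using A by simp
next
  case (Suc k)
  have "((t \<cdot>\<^sub>m A) ^\<^sub>m Suc k) $$ (i,j) = (\<Sum>l<n. ((t \<cdot>\<^sub>m A) ^\<^sub>m k) $$ (i,l) * (t * A $$ (l,j)))"
    using Suc.prems A by (simp add: index_mult_mat scalar_prod_def atLeast0LessThan)
  also have "\<dots> = t ^ Suc k * (\<Sum>l<n. (A ^\<^sub>m k) $$ (i,l) * A $$ (l,j))"
    unfolding sum_distrib_left by (intro sum.cong refl) (use Suc in \<open>auto simp: algebra_simps\<close>)
  also have "\<dots> = t ^ Suc k * (A ^\<^sub>m Suc k) $$ (i,j)"
    using Suc.prems A by (simp add: index_mult_mat scalar_prod_def atLeast0LessThan)
  finally show ?case .
qed

definition abs_entry_sum :: "real mat \<Rightarrow> nat \<Rightarrow> real" where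
  "abs_entry_sum A n = (\<Sum>i<n. \<Sum>j<n. \<bar>A $$ (i,j)\<bar>)"

lemma abs_index_pow_mat_le:
  fixes A :: "real mat"
  assumes A: "A \<in> carrier_mat n n" and ij: "i < n" "j < n"
  shows "\<bar>(A ^\<^sub>m k) $$ (i,j)\<bar> \<le> abs_entry_sum A n ^ k"
  using ij
proof (induction k arbitrary: i j)
  case 0
  then show ?case using A by simp
next
  case (Suc k)
  have col: "(\<Sum>l<n. \<bar>A $$ (l,j)\<bar>) \<le> abs_entry_sum A n"
    unfolding abs_entry_sum_def by (intro sum_mono member_le_sum) (use Suc.prems in auto)
  have nonneg: "abs_entry_sum A n \<ge> 0"
    unfolding abs_entry_sum_def by (intro sum_nonneg) auto
  have "\<bar>(A ^\<^sub>m Suc k) $$ (i,j)\<bar> = \<bar>\<Sum>l<n. (A ^\<^sub>m k) $$ (i,l) * A $$ (l,j)\<bar>"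
    using Suc.prems A by (simp add: index_mult_mat scalar_prod_def atLeast0LessThan)
  also have "\<dots> \<le> (\<Sum>l<n. \<bar>(A ^\<^sub>m k) $$ (i,l)\<bar> * \<bar>A $$ (l,j)\<bar>)"
    by (rule order_trans[OF sum_abs]) (simp add: abs_mult)
  also have "\<dots> \<le> (\<Sum>l<n. abs_entry_sum A n ^ k * \<bar>A $$ (l,j)\<bar>)"
    by (intro sum_mono mult_right_mono Suc.IH) (use Suc.prems in auto)
  also have "\<dots> \<le> abs_entry_sum A n ^ k * abs_entry_sum A n"
    unfolding sum_distrib_left[symmetric] by (intro mult_left_mono col) (use nonneg in auto)
  finally show ?case by (simp add: mult.commute)
qed

definition expm_entry :: "real mat \<Rightarrow> nat \<Rightarrow> nat \<Rightarrow> real \<Rightarrow> real" where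
  "expm_entry A i j t = (\<Sum>k. (A ^\<^sub>m k) $$ (i,j) / fact k * t ^ k)"

lemma summable_expm_entry:
  fixes A :: "real mat"
  assumes A: "A \<in> carrier_mat n n" and ij: "i < n" "j < n"
  shows "summable (\<lambda>k. (A ^\<^sub>m k) $$ (i,j) / fact k * t ^ k)"
proof (rule summable_comparison_test'[OF summable_exp[of "abs_entry_sum A n * \<bar>t\<bar>"]])
  fix k
  have "norm ((A ^\<^sub>m k) $$ (i,j) / fact k * t ^ k) = \<bar>(A ^\<^sub>m k) $$ (i,j)\<bar> * \<bar>t\<bar> ^ k / fact k"
    by (simp add: abs_mult power_abs)
  also have "\<dots> \<le> abs_entry_sum A n ^ k * \<bar>t\<bar> ^ k / fact k"
    by (intro divide_right_mono mult_right_mono abs_index_pow_mat_le[OF A ij]) auto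
  finally show "norm ((A ^\<^sub>m k) $$ (i,j) / fact k * t ^ k)
      \<le> inverse (fact k) * (abs_entry_sum A n * \<bar>t\<bar>) ^ k"
    by (simp add: power_mult_distrib field_simps)
qed

lemma index_mat_exp_smult:
  assumes A: "A \<in> carrier_mat n n" and ij: "i < n" "j < n"
  shows "mat_exp (t \<cdot>\<^sub>m A) $$ (i,j) = expm_entry A i j t"
  using assms unfolding mat_exp_def expm_entry_def
  by (simp add: index_pow_mat_smult[OF A] mult.commute)

lemma expm_entry_0:
  "A \<in> carrier_mat n n \<Longrightarrow> i < n \<Longrightarrow> j < n \<Longrightarrow> expm_entry A i j 0 = (if i = j then 1 else 0)"
  unfolding expm_entry_def by (subst powser_zero) simp

lemma expm_entry_has_derivative:
  assumes A: "A \<in> carrier_mat n n" and ij: "i < n" "j < n"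
  shows "(expm_entry A i j has_real_derivative (\<Sum>l<n. A $$ (i,l) * expm_entry A l j t)) (at t)"
proof -
  define c where "c k = (A ^\<^sub>m k) $$ (i,j) / fact k" for k
  have deriv: "((\<lambda>s. \<Sum>k. c k * s ^ k) has_real_derivative (\<Sum>k. diffs c k * t ^ k)) (at t)"
    by (rule termdiffs_strong_converges_everywhere)
       (use summable_expm_entry[OF A ij] c_def in auto)
  have diffs_c: "diffs c k * t ^ k = (\<Sum>l<n. A $$ (i,l) * ((A ^\<^sub>m k) $$ (l,j) / fact k * t ^ k))"
    for k
  proof -
    have "diffs c k = (A ^\<^sub>m Suc k) $$ (i,j) / fact k"
      unfolding diffs_def c_def fact_Suc by (simp del: of_nat_Suc)
    also have "(A ^\<^sub>m Suc k) $$ (i,j) = (\<Sum>l<n. A $$ (i,l) * (A ^\<^sub>m k) $$ (l,j))"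
      using A ij by (subst pow_mat_Suc_left[OF A])
        (simp add: index_mult_mat scalar_prod_def atLeast0LessThan)
    finally show ?thesis by (simp add: sum_distrib_right sum_divide_distrib mult.assoc)
  qed
  have "(\<Sum>k. diffs c k * t ^ k) = (\<Sum>l<n. \<Sum>k. A $$ (i,l) * ((A ^\<^sub>m k) $$ (l,j) / fact k * t ^ k))"
    unfolding diffs_c
    by (rule suminf_sum) (intro summable_mult summable_expm_entry[OF A], use ij in auto)
  also have "\<dots> = (\<Sum>l<n. A $$ (i,l) * expm_entry A l j t)"
    unfolding expm_entry_def
    by (intro sum.cong refl suminf_mult summable_expm_entry[OF A]) (use ij in auto)
  finally show ?thesis
    using deriv unfolding c_def expm_entry_def[abs_def] by simp
qed

section \<open>Growth of \<open>\<parallel>e\<^sup>t\<^sup>A x\<parallel>\<close> and the numerical range\<close>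

definition quad_form :: "real mat \<Rightarrow> nat \<Rightarrow> (nat \<Rightarrow> real) \<Rightarrow> real" where
  "quad_form A n x = (\<Sum>i<n. \<Sum>j<n. x i * A $$ (i,j) * x j)"

lemma quad_form_cong: "(\<And>i. i < n \<Longrightarrow> x i = y i) \<Longrightarrow> quad_form A n x = quad_form A n y"
  unfolding quad_form_def by (intro sum.cong refl) auto

lemma quad_form_smult: "A \<in> carrier_mat n n \<Longrightarrow> quad_form (c \<cdot>\<^sub>m A) n x = c * quad_form A n x"
  unfolding quad_form_def by (simp add: sum_distrib_left mult_ac)

definition expm_traj :: "real mat \<Rightarrow> nat \<Rightarrow> (nat \<Rightarrow> real) \<Rightarrow> nat \<Rightarrow> real \<Rightarrow> real" where
  "expm_traj A n x i t = (\<Sum>j<n. expm_entry A i j t * x j)"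

definition expm_sqnorm :: "real mat \<Rightarrow> nat \<Rightarrow> (nat \<Rightarrow> real) \<Rightarrow> real \<Rightarrow> real" where
  "expm_sqnorm A n x t = (\<Sum>i<n. (expm_traj A n x i t)\<^sup>2)"

lemma expm_traj_0:
  assumes A: "A \<in> carrier_mat n n" and i: "i < n"
  shows "expm_traj A n x i 0 = x i"
proof -
  have "expm_traj A n x i 0 = (\<Sum>j<n. if i = j then x j else 0)"
    unfolding expm_traj_def by (intro sum.cong refl) (use A i in \<open>auto simp: expm_entry_0\<close>)
  then show ?thesis using i by (simp add: sum.delta)
qed

lemma expm_sqnorm_0: "A \<in> carrier_mat n n \<Longrightarrow> expm_sqnorm A n x 0 = (\<Sum>i<n. (x i)\<^sup>2)"
  unfolding expm_sqnorm_def by (simp add: expm_traj_0)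

lemma expm_sqnorm_has_derivative:
  assumes A: "A \<in> carrier_mat n n"
  shows "(expm_sqnorm A n x has_real_derivative 2 * quad_form A n (\<lambda>i. expm_traj A n x i t)) (at t)"
proof -
  have traj: "((\<lambda>t. expm_traj A n x i t) has_real_derivative
      (\<Sum>l<n. A $$ (i,l) * expm_traj A n x l t)) (at t)" if "i < n" for i
  proof -
    have "((\<lambda>t. expm_traj A n x i t) has_real_derivative
        (\<Sum>j<n. (\<Sum>l<n. A $$ (i,l) * expm_entry A l j t) * x j)) (at t)"
      unfolding expm_traj_def
      by (intro DERIV_sum DERIV_cmult_right expm_entry_has_derivative[OF A that]) auto
    also have "(\<Sum>j<n. (\<Sum>l<n. A $$ (i,l) * expm_entry A l j t) * x j)
        = (\<Sum>l<n. A $$ (i,l) * expm_traj A n x l t)"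
      unfolding expm_traj_def sum_distrib_left sum_distrib_right
      by (subst sum.swap) (simp add: mult.assoc)
    finally show ?thesis .
  qed
  have "(expm_sqnorm A n x has_real_derivative
      (\<Sum>i<n. 2 * expm_traj A n x i t * (\<Sum>l<n. A $$ (i,l) * expm_traj A n x l t))) (at t)"
    unfolding expm_sqnorm_def[abs_def]
    by (intro DERIV_sum) (auto intro!: derivative_eq_intros traj)
  then show ?thesis
    unfolding quad_form_def sum_distrib_left by (simp add: mult.assoc)
qed

lemma mat_exp_smult_carrier: "A \<in> carrier_mat n n \<Longrightarrow> mat_exp (t \<cdot>\<^sub>m A) \<in> carrier_mat n n"
  unfolding mat_exp_def carrier_mat_def by simp

lemma vnorm2_mat_exp_mult_vec:
  assumes A: "A \<in> carrier_mat n n" and x: "x \<in> carrier_vec n"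
  shows "vnorm2 (mat_exp (t \<cdot>\<^sub>m A) *\<^sub>v x) = sqrt (expm_sqnorm A n (($) x) t)"
proof -
  have E: "mat_exp (t \<cdot>\<^sub>m A) \<in> carrier_mat n n" by (rule mat_exp_smult_carrier[OF A])
  have "(mat_exp (t \<cdot>\<^sub>m A) *\<^sub>v x) $ i = expm_traj A n (($) x) i t" if i: "i < n" for i
    using E x i unfolding expm_traj_def
    by (auto simp: scalar_prod_def atLeast0LessThan index_mat_exp_smult[OF A] intro!: sum.cong)
  moreover have "dim_vec (mat_exp (t \<cdot>\<^sub>m A) *\<^sub>v x) = n" using E by simp
  ultimately show ?thesis unfolding vnorm2_def expm_sqnorm_def by simp
qed

lemma expm_sqnorm_le:
  assumes A: "A \<in> carrier_mat n n"
    and range: "\<And>y. quad_form A n y \<le> \<mu> * (\<Sum>i<n. (y i)\<^sup>2)" and t: "t \<ge> 0"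
  shows "expm_sqnorm A n x t \<le> exp (2 * \<mu> * t) * (\<Sum>i<n. (x i)\<^sup>2)"
proof -
  define g where "g s = exp (- (2 * \<mu> * s)) * expm_sqnorm A n x s" for s
  have "g t \<le> g 0"
  proof (rule DERIV_nonpos_imp_nonincreasing[OF t])
    fix s :: real
    have deriv: "(g has_real_derivative exp (- (2 * \<mu> * s)) * (- (2 * \<mu>)) * expm_sqnorm A n x s
        + exp (- (2 * \<mu> * s)) * (2 * quad_form A n (\<lambda>i. expm_traj A n x i s))) (at s)"
      using expm_sqnorm_has_derivative[OF A, of x s] unfolding g_def[abs_def]
      by (auto intro!: derivative_eq_intros)
    have "quad_form A n (\<lambda>i. expm_traj A n x i s) \<le> \<mu> * expm_sqnorm A n x s"
      using range[of "\<lambda>i. expm_traj A n x i s"] unfolding expm_sqnorm_def .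
    then have "exp (- (2 * \<mu> * s)) * (- (2 * \<mu>)) * expm_sqnorm A n x s
        + exp (- (2 * \<mu> * s)) * (2 * quad_form A n (\<lambda>i. expm_traj A n x i s)) \<le> 0"
      by (simp add: algebra_simps mult_left_mono)
    with deriv show "\<exists>y. (g has_real_derivative y) (at s) \<and> y \<le> 0" by blast
  qed
  then have "exp (- (2 * \<mu> * t)) * expm_sqnorm A n x t \<le> (\<Sum>i<n. (x i)\<^sup>2)"
    unfolding g_def using expm_sqnorm_0[OF A] by simp
  then have "exp (2 * \<mu> * t) * (exp (- (2 * \<mu> * t)) * expm_sqnorm A n x t)
      \<le> exp (2 * \<mu> * t) * (\<Sum>i<n. (x i)\<^sup>2)"
    by (intro mult_left_mono) auto
  then show ?thesis by (simp add: exp_minus field_simps)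
qed

lemma vnorm2_mat_exp_mult_vec_le:
  assumes A: "A \<in> carrier_mat n n"
    and range: "\<And>y. quad_form A n y \<le> \<mu> * (\<Sum>i<n. (y i)\<^sup>2)" and t: "t \<ge> 0"
    and x: "x \<in> carrier_vec n" "vnorm2 x = 1"
  shows "vnorm2 (mat_exp (t \<cdot>\<^sub>m A) *\<^sub>v x) \<le> exp (t * \<mu>)"
proof -
  have "(\<Sum>i<n. (x $ i)\<^sup>2) = 1" using x unfolding vnorm2_def by simp
  then have "expm_sqnorm A n (($) x) t \<le> (exp (t * \<mu>))\<^sup>2"
    using expm_sqnorm_le[OF A range t, of "($) x"]
    by (simp add: power2_eq_square exp_add[symmetric] mult.assoc)
  then show ?thesis
    unfolding vnorm2_mat_exp_mult_vec[OF A x(1)] by (simp add: real_le_lsqrt)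
qed

lemma bdd_above_spec_norm_set:
  assumes A: "A \<in> carrier_mat n n"
    and range: "\<And>y. quad_form A n y \<le> \<mu> * (\<Sum>i<n. (y i)\<^sup>2)" and t: "t \<ge> 0"
  shows "bdd_above {vnorm2 (mat_exp (t \<cdot>\<^sub>m A) *\<^sub>v x) | x.
    x \<in> carrier_vec (dim_col (mat_exp (t \<cdot>\<^sub>m A))) \<and> vnorm2 x = 1}"
  using vnorm2_mat_exp_mult_vec_le[OF A range t] mat_exp_smult_carrier[OF A, of t]
  by (intro bdd_aboveI[where M = "exp (t * \<mu>)"]) auto

lemma spec_norm_mat_exp_le:
  assumes A: "A \<in> carrier_mat n n" and n: "0 < n"
    and range: "\<And>y. quad_form A n y \<le> \<mu> * (\<Sum>i<n. (y i)\<^sup>2)" and t: "t \<ge> 0"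
  shows "spec_norm (mat_exp (t \<cdot>\<^sub>m A)) \<le> exp (t * \<mu>)"
  unfolding spec_norm_def
proof (rule cSup_least)
  have "(\<Sum>i<n. (unit_vec n 0 $ i)\<^sup>2) = (\<Sum>i<n. if i = 0 then 1 else 0 :: real)"
    by (intro sum.cong refl) auto
  then have "vnorm2 (unit_vec n 0) = 1"
    using n unfolding vnorm2_def by simp
  then show "{vnorm2 (mat_exp (t \<cdot>\<^sub>m A) *\<^sub>v x) | x.
      x \<in> carrier_vec (dim_col (mat_exp (t \<cdot>\<^sub>m A))) \<and> vnorm2 x = 1} \<noteq> {}"
    using mat_exp_smult_carrier[OF A, of t] unit_vec_carrier[of n 0] by blast
qed (use vnorm2_mat_exp_mult_vec_le[OF A range t] mat_exp_smult_carrier[OF A, of t] in auto)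

lemma not_spec_norm_mat_exp_le:
  assumes A: "A \<in> carrier_mat n n"
    and range: "\<And>y. quad_form A n y \<le> \<mu> * (\<Sum>i<n. (y i)\<^sup>2)"
    and x: "x \<in> carrier_vec n" "vnorm2 x = 1" and gt: "quad_form A n (($) x) > \<omega>"
  shows "\<exists>t\<ge>0. \<not> spec_norm (mat_exp (t \<cdot>\<^sub>m A)) \<le> exp (t * \<omega>)"
proof -
  have unit: "(\<Sum>i<n. (x $ i)\<^sup>2) = 1" using x unfolding vnorm2_def by simp
  define h where "h s = expm_sqnorm A n (($) x) s - exp (2 * \<omega> * s)" for s
  have "quad_form A n (\<lambda>i. expm_traj A n (($) x) i 0) = quad_form A n (($) x)"
    by (intro quad_form_cong) (simp add: expm_traj_0[OF A])
  then have "(h has_real_derivative 2 * quad_form A n (($) x) - 2 * \<omega>) (at 0)"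
    unfolding h_def[abs_def]
    by (auto intro!: derivative_eq_intros expm_sqnorm_has_derivative[OF A])
  moreover have "0 < 2 * quad_form A n (($) x) - 2 * \<omega>" using gt by simp
  ultimately obtain d where "d > 0" and incr: "\<And>e. e > 0 \<Longrightarrow> e < d \<Longrightarrow> h 0 < h (0 + e)"
    using DERIV_pos_inc_right by blast
  define t where "t = d / 2"
  have t: "t > 0" "t < d" using \<open>d > 0\<close> unfolding t_def by auto
  have "h 0 = 0" unfolding h_def by (simp add: expm_sqnorm_0[OF A] unit)
  then have "(exp (t * \<omega>))\<^sup>2 < expm_sqnorm A n (($) x) t"
    using incr[OF t] unfolding h_def by (simp add: power2_eq_square exp_add[symmetric] algebra_simps)
  then have "exp (t * \<omega>) < vnorm2 (mat_exp (t \<cdot>\<^sub>m A) *\<^sub>v x)"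
    unfolding vnorm2_mat_exp_mult_vec[OF A x(1)] by (simp add: real_less_rsqrt)
  also have "\<dots> \<le> spec_norm (mat_exp (t \<cdot>\<^sub>m A))"
    unfolding spec_norm_def
    by (rule cSup_upper)
       (use mat_exp_smult_carrier[OF A, of t] x bdd_above_spec_norm_set[OF A range, of t] t in auto)
  finally show ?thesis using t by (intro exI[of _ t]) auto
qed

lemma not_spec_norm_mat_exp_le_sign_vector:
  assumes A: "A \<in> carrier_mat n n" and n: "0 < n"
    and range: "\<And>y. quad_form A n y \<le> \<mu> * (\<Sum>i<n. (y i)\<^sup>2)"
    and sign: "\<And>i. i < n \<Longrightarrow> (x i)\<^sup>2 = 1" and gt: "quad_form A n x > \<omega> * real n"
  shows "\<exists>t\<ge>0. \<not> spec_norm (mat_exp (t \<cdot>\<^sub>m A)) \<le> exp (t * \<omega>)"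
proof (rule not_spec_norm_mat_exp_le[OF A range])
  define u where "u = vec n (\<lambda>i. x i / sqrt (real n))"
  show "u \<in> carrier_vec n" unfolding u_def by simp
  have "(\<Sum>i<n. (u $ i)\<^sup>2) = (\<Sum>i<n. 1 / real n)"
    unfolding u_def by (intro sum.cong refl) (simp add: power_divide sign)
  then show "vnorm2 u = 1" unfolding vnorm2_def u_def using n by simp
  have "quad_form A n (($) u) = quad_form A n x / real n"
    unfolding quad_form_def u_def using n
    by (simp add: sum_divide_distrib algebra_simps flip: real_sqrt_mult)
  then show "quad_form A n (($) u) > \<omega>" using gt n by (simp add: pos_less_divide_eq)
qed

section \<open>Kronecker products with an identity\<close>

lemma sum_lessThan_mult_blocks:
  fixes f :: "nat \<Rightarrow> 'a::comm_monoid_add"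
  shows "(\<Sum>p<k * m. f p) = (\<Sum>a<k. \<Sum>i<m. f (a * m + i))"
proof -
  have "(\<Sum>p<k * m. f p) = (\<Sum>a<k. sum f {a * m..<a * m + m})"
    using sum.nat_group[of f m k] by simp
  also have "\<dots> = (\<Sum>a<k. \<Sum>i<m. f (a * m + i))"
  proof (rule sum.cong[OF refl])
    fix a
    show "sum f {a * m..<a * m + m} = (\<Sum>i<m. f (a * m + i))"
      using sum.shift_bounds_nat_ivl[of f 0 "a * m" m] by (simp add: atLeast0LessThan add.commute)
  qed
  finally show ?thesis .
qed

lemma kron_carrier: "A \<in> carrier_mat k l \<Longrightarrow> B \<in> carrier_mat m n \<Longrightarrow> kron A B \<in> carrier_mat (k * m) (l * n)"
  unfolding kron_def carrier_mat_def by simp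

lemma block_index_less:
  fixes a i k m :: nat
  assumes "a < k" "i < m"
  shows "a * m + i < k * m"
proof -
  have "a * m + i < Suc a * m" using assms(2) by simp
  also have "\<dots> \<le> k * m" using assms(1) by (intro mult_le_mono1) simp
  finally show ?thesis .
qed

lemma index_kron:
  assumes "A \<in> carrier_mat k l" "B \<in> carrier_mat m n" "a < k" "b < l" "i < m" "j < n"
  shows "kron A B $$ (a * m + i, b * n + j) = A $$ (a,b) * B $$ (i,j)"
  using assms block_index_less[of a k i m] block_index_less[of b l j n] unfolding kron_def by simp

lemma quad_form_kron_blocks:
  "quad_form K (k * m) x
    = (\<Sum>a<k. \<Sum>i<m. \<Sum>b<k. \<Sum>j<m. x (a * m + i) * K $$ (a * m + i, b * m + j) * x (b * m + j))"
  unfolding quad_form_def sum_lessThan_mult_blocks ..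

lemma quad_form_kron_one_left:
  assumes B: "B \<in> carrier_mat m m"
  shows "quad_form (kron (1\<^sub>m k) B) (k * m) x = (\<Sum>a<k. quad_form B m (\<lambda>i. x (a * m + i)))"
proof -
  have "(\<Sum>b<k. \<Sum>j<m. x (a * m + i) * kron (1\<^sub>m k) B $$ (a * m + i, b * m + j) * x (b * m + j))
      = (\<Sum>j<m. x (a * m + i) * B $$ (i,j) * x (a * m + j))" if a: "a < k" and i: "i < m" for a i
  proof -
    have "(\<Sum>j<m. x (a * m + i) * kron (1\<^sub>m k) B $$ (a * m + i, b * m + j) * x (b * m + j))
       = (if b = a then (\<Sum>j<m. x (a * m + i) * B $$ (i,j) * x (a * m + j)) else 0)" if "b < k" for b
      using a that i by (auto intro!: sum.cong simp: index_kron[OF one_carrier_mat B])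
    then have "(\<Sum>b<k. \<Sum>j<m. x (a * m + i) * kron (1\<^sub>m k) B $$ (a * m + i, b * m + j) * x (b * m + j))
      = (\<Sum>b<k. if b = a then (\<Sum>j<m. x (a * m + i) * B $$ (i,j) * x (a * m + j)) else 0)"
      by (intro sum.cong refl) auto
    then show ?thesis using a by (simp add: sum.delta)
  qed
  then show ?thesis unfolding quad_form_kron_blocks by (simp add: quad_form_def)
qed

lemma quad_form_kron_one_right:
  assumes C: "C \<in> carrier_mat k k"
  shows "quad_form (kron C (1\<^sub>m m)) (k * m) x = (\<Sum>i<m. quad_form C k (\<lambda>a. x (a * m + i)))"
proof -
  have inner: "(\<Sum>j<m. x (a * m + i) * kron C (1\<^sub>m m) $$ (a * m + i, b * m + j) * x (b * m + j))
      = x (a * m + i) * C $$ (a,b) * x (b * m + i)" if "a < k" "b < k" "i < m" for a b i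
  proof -
    have "(\<Sum>j<m. x (a * m + i) * kron C (1\<^sub>m m) $$ (a * m + i, b * m + j) * x (b * m + j))
       = (\<Sum>j<m. if j = i then x (a * m + i) * C $$ (a,b) * x (b * m + j) else 0)"
      using that by (intro sum.cong refl) (auto simp: index_kron[OF C one_carrier_mat])
    then show ?thesis using that by (simp add: sum.delta)
  qed
  have "quad_form (kron C (1\<^sub>m m)) (k * m) x
      = (\<Sum>a<k. \<Sum>i<m. \<Sum>b<k. x (a * m + i) * C $$ (a,b) * x (b * m + i))"
    unfolding quad_form_kron_blocks by (intro sum.cong refl) (simp add: inner)
  also have "\<dots> = (\<Sum>i<m. \<Sum>a<k. \<Sum>b<k. x (a * m + i) * C $$ (a,b) * x (b * m + i))"
    by (rule sum.swap)
  finally show ?thesis by (simp add: quad_form_def)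
qed

section \<open>Row-weighted central differences\<close>

definition wtridiag :: "nat \<Rightarrow> (nat \<Rightarrow> real) \<Rightarrow> real mat" where
  "wtridiag m c = mat m m (\<lambda>(i,j). c i *
     (if i = j + 1 then -1 else if i = j then 0 else if j = i + 1 then 1 else 0))"

lemma wtridiag_carrier: "wtridiag m c \<in> carrier_mat m m"
  unfolding wtridiag_def by simp

lemma mat_diag_mult_tridiag:
  "mat_diag m c * (h \<cdot>\<^sub>m tridiag m (-1) 0 1) = wtridiag m (\<lambda>i. c i * h)"
proof -
  have T: "h \<cdot>\<^sub>m tridiag m (-1) 0 1 \<in> carrier_mat m m" by (simp add: tridiag_def)
  show ?thesis
    unfolding mat_diag_mult_left[OF T] by (rule eq_matI) (auto simp: wtridiag_def tridiag_def)
qed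

lemma tridiag_mult_vec_index:
  fixes y :: "nat \<Rightarrow> real"
  assumes i: "i < Suc m'"
  shows "(\<Sum>j<Suc m'. (if i = j + 1 then -1 else if i = j then 0 else if j = i + 1 then 1 else 0) * y j)
     = (if i < m' then y (Suc i) else 0) - (if 0 < i then y (i - 1) else 0)"
proof -
  have "(\<Sum>j<Suc m'. (if i = j + 1 then -1 else if i = j then 0 else if j = i + 1 then 1 else 0) * y j)
      = (\<Sum>j<Suc m'. if j = Suc i then y j else 0) - (\<Sum>j<Suc m'. if Suc j = i then y j else 0)"
    unfolding sum_subtractf[symmetric] by (intro sum.cong refl) auto
  moreover have "(\<Sum>j<Suc m'. if Suc j = i then y j else 0) = (if 0 < i then y (i - 1) else 0)"
    using i by (cases i) (simp_all add: sum.delta')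
  ultimately show ?thesis by (simp add: sum.delta')
qed

lemma quad_form_wtridiag:
  "quad_form (wtridiag (Suc m') c) (Suc m') y = (\<Sum>i<m'. (c i - c (Suc i)) * y i * y (Suc i))"
proof -
  have "quad_form (wtridiag (Suc m') c) (Suc m') y
      = (\<Sum>i<Suc m'. c i * y i * ((if i < m' then y (Suc i) else 0) - (if 0 < i then y (i - 1) else 0)))"
    unfolding quad_form_def
  proof (rule sum.cong[OF refl])
    fix i assume i: "i \<in> {..<Suc m'}"
    have "(\<Sum>j<Suc m'. y i * wtridiag (Suc m') c $$ (i, j) * y j) = c i * y i *
        (\<Sum>j<Suc m'. (if i = j + 1 then -1 else if i = j then 0 else if j = i + 1 then 1 else 0) * y j)"
      unfolding sum_distrib_left using i by (intro sum.cong refl) (auto simp: wtridiag_def)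
    then show "(\<Sum>j<Suc m'. y i * wtridiag (Suc m') c $$ (i, j) * y j)
      = c i * y i * ((if i < m' then y (Suc i) else 0) - (if 0 < i then y (i - 1) else 0))"
      using tridiag_mult_vec_index[of i m' y] i by simp
  qed
  also have "\<dots> = (\<Sum>i<Suc m'. if i < m' then c i * y i * y (Suc i) else 0)
      - (\<Sum>i<Suc m'. if 0 < i then c i * y i * y (i - 1) else 0)"
    unfolding sum_subtractf[symmetric] by (intro sum.cong refl) (auto simp: algebra_simps)
  also have "(\<Sum>i<Suc m'. if 0 < i then c i * y i * y (i - 1) else 0)
      = (\<Sum>i<m'. c (Suc i) * y (Suc i) * y i)"
    by (subst sum.lessThan_Suc_shift) simp
  finally show ?thesis by (simp add: sum_subtractf[symmetric] algebra_simps)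
qed

lemma sum_adjacent_products_le:
  fixes d :: real
  shows "(\<Sum>i<m'. d * y i * y (Suc i)) \<le> \<bar>d\<bar> * (\<Sum>i<Suc m'. (y i)\<^sup>2)"
proof -
  have "d * y i * y (Suc i) \<le> \<bar>d\<bar> * (((y i)\<^sup>2 + (y (Suc i))\<^sup>2) / 2)" for i
  proof -
    have "d * y i * y (Suc i) \<le> \<bar>d\<bar> * \<bar>y i * y (Suc i)\<bar>"
      by (metis abs_ge_self abs_mult mult.assoc)
    moreover have "\<bar>y i * y (Suc i)\<bar> \<le> ((y i)\<^sup>2 + (y (Suc i))\<^sup>2) / 2"
      using sum_squares_bound[of "\<bar>y i\<bar>" "\<bar>y (Suc i)\<bar>"] by (simp add: abs_mult)
    ultimately show ?thesis by (meson abs_ge_zero mult_left_mono order_trans)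
  qed
  then have "(\<Sum>i<m'. d * y i * y (Suc i)) \<le> (\<Sum>i<m'. \<bar>d\<bar> * (((y i)\<^sup>2 + (y (Suc i))\<^sup>2) / 2))"
    by (intro sum_mono)
  also have "\<dots> = \<bar>d\<bar> * (((\<Sum>i<m'. (y i)\<^sup>2) + (\<Sum>i<m'. (y (Suc i))\<^sup>2)) / 2)"
    by (simp only: sum_distrib_left[symmetric] sum_divide_distrib[symmetric] sum.distrib)
  also have "\<dots> \<le> \<bar>d\<bar> * (\<Sum>i<Suc m'. (y i)\<^sup>2)"
  proof -
    have "(\<Sum>i<m'. (y i)\<^sup>2) \<le> (\<Sum>i<Suc m'. (y i)\<^sup>2)" by simp
    moreover have "(\<Sum>i<m'. (y (Suc i))\<^sup>2) \<le> (\<Sum>i<Suc m'. (y i)\<^sup>2)"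
      by (subst sum.lessThan_Suc_shift) simp
    ultimately have "((\<Sum>i<m'. (y i)\<^sup>2) + (\<Sum>i<m'. (y (Suc i))\<^sup>2)) / 2 \<le> (\<Sum>i<Suc m'. (y i)\<^sup>2)"
      by (simp only: field_simps)
    then show ?thesis by (rule mult_left_mono) simp
  qed
  finally show ?thesis .
qed

lemma quad_form_wtridiag_le:
  assumes c: "\<And>i. c i - c (Suc i) = d" and m: "0 < m"
  shows "quad_form (wtridiag m c) m y \<le> \<bar>d\<bar> * (\<Sum>i<m. (y i)\<^sup>2)"
  using m sum_adjacent_products_le by (cases m) (simp_all add: quad_form_wtridiag c)

lemma quad_form_wtridiag_alternating:
  assumes c: "\<And>i. c i - c (Suc i) = d" and m: "0 < m"
  shows "quad_form (wtridiag m c) m (\<lambda>i. (-1) ^ i) = - d * real (m - 1)"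
proof -
  have "(-1::real) ^ i * (-1) ^ i = 1" for i by (simp flip: power_mult_distrib)
  then show ?thesis using m by (cases m) (simp_all add: quad_form_wtridiag c mult.assoc)
qed

lemma quad_form_wtridiag_const:
  assumes c: "\<And>i. c i - c (Suc i) = d" and m: "0 < m"
  shows "quad_form (wtridiag m c) m (\<lambda>i. 1) = d * real (m - 1)"
  using m by (cases m) (simp_all add: quad_form_wtridiag c)

section \<open>The two discretised convection matrices\<close>

lemma A1_mat_eq_kron:
  "A1_mat r L S m1 m2 = r \<cdot>\<^sub>m kron (1\<^sub>m m2)
     (wtridiag m1 (\<lambda>i. (L + real (i + 1) * ((S - L) / real (m1 + 1))) / (2 * ((S - L) / real (m1 + 1)))))"
  unfolding A1_mat_def Let_def mat_diag_mult_tridiag by simp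

lemma A2_mat_eq_kron:
  "A2_mat \<kappa> \<eta> V m1 m2 = \<kappa> \<cdot>\<^sub>m kron
     (wtridiag m2 (\<lambda>j. (\<eta> - real (j + 1) * (V / real (m2 + 1))) / (2 * (V / real (m2 + 1))))) (1\<^sub>m m1)"
proof -
  have "\<eta> \<cdot>\<^sub>m 1\<^sub>m m2 - mat_diag m2 (\<lambda>j. real (j + 1) * (V / real (m2 + 1)))
      = mat_diag m2 (\<lambda>j. \<eta> - real (j + 1) * (V / real (m2 + 1)))"
    by (rule eq_matI) (auto simp: mat_diag_def)
  then show ?thesis unfolding A2_mat_def Let_def by (simp add: mat_diag_mult_tridiag)
qed

lemma A1_mat_carrier: "A1_mat r L S m1 m2 \<in> carrier_mat (m2 * m1) (m2 * m1)"
  unfolding A1_mat_eq_kron by (intro smult_carrier_mat kron_carrier one_carrier_mat wtridiag_carrier)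

lemma A2_mat_carrier: "A2_mat \<kappa> \<eta> V m1 m2 \<in> carrier_mat (m2 * m1) (m2 * m1)"
  unfolding A2_mat_eq_kron by (intro smult_carrier_mat kron_carrier one_carrier_mat wtridiag_carrier)

lemma quad_form_A1_mat:
  assumes "L < S"
  obtains c where "\<And>i. c i - c (Suc i) = - 1/2"
    and "\<And>x. quad_form (A1_mat r L S m1 m2) (m2 * m1) x
           = r * (\<Sum>a<m2. quad_form (wtridiag m1 c) m1 (\<lambda>i. x (a * m1 + i)))"
proof -
  define ds where "ds = (S - L) / real (m1 + 1)"
  define c where "c = (\<lambda>i. (L + real (i + 1) * ds) / (2 * ds))"
  have "ds \<noteq> 0" using assms unfolding ds_def by simp
  then have "c i - c (Suc i) = - 1/2" for i
    unfolding c_def by (simp add: field_simps)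
  moreover have "quad_form (A1_mat r L S m1 m2) (m2 * m1) x
      = r * (\<Sum>a<m2. quad_form (wtridiag m1 c) m1 (\<lambda>i. x (a * m1 + i)))" for x
    unfolding A1_mat_eq_kron c_def ds_def
    by (simp add: quad_form_smult[OF kron_carrier[OF one_carrier_mat wtridiag_carrier]]
        quad_form_kron_one_left[OF wtridiag_carrier])
  ultimately show ?thesis by (rule that)
qed

lemma quad_form_A2_mat:
  assumes "0 < V"
  obtains c where "\<And>i. c i - c (Suc i) = 1/2"
    and "\<And>x. quad_form (A2_mat \<kappa> \<eta> V m1 m2) (m2 * m1) x
           = \<kappa> * (\<Sum>i<m1. quad_form (wtridiag m2 c) m2 (\<lambda>a. x (a * m1 + i)))"
proof -
  define dv where "dv = V / real (m2 + 1)"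
  define c where "c = (\<lambda>j. (\<eta> - real (j + 1) * dv) / (2 * dv))"
  have "dv \<noteq> 0" using assms unfolding dv_def by simp
  then have "c i - c (Suc i) = 1/2" for i
    unfolding c_def by (simp add: field_simps)
  moreover have "quad_form (A2_mat \<kappa> \<eta> V m1 m2) (m2 * m1) x
      = \<kappa> * (\<Sum>i<m1. quad_form (wtridiag m2 c) m2 (\<lambda>a. x (a * m1 + i)))" for x
    unfolding A2_mat_eq_kron c_def dv_def
    by (simp add: quad_form_smult[OF kron_carrier[OF wtridiag_carrier one_carrier_mat]]
        quad_form_kron_one_right[OF wtridiag_carrier])
  ultimately show ?thesis by (rule that)
qed

lemma quad_form_A1_mat_le:
  assumes "0 < m1" "L < S" "0 \<le> r"
  shows "quad_form (A1_mat r L S m1 m2) (m2 * m1) x \<le> r / 2 * (\<Sum>p<m2 * m1. (x p)\<^sup>2)"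
proof -
  obtain c where c: "\<And>i. c i - c (Suc i) = - 1/2"
    and q: "\<And>x. quad_form (A1_mat r L S m1 m2) (m2 * m1) x
           = r * (\<Sum>a<m2. quad_form (wtridiag m1 c) m1 (\<lambda>i. x (a * m1 + i)))"
    using quad_form_A1_mat[OF assms(2)] by blast
  have "quad_form (A1_mat r L S m1 m2) (m2 * m1) x \<le> r * (\<Sum>a<m2. \<bar>- 1/2\<bar> * (\<Sum>i<m1. (x (a * m1 + i))\<^sup>2))"
    unfolding q by (intro mult_left_mono sum_mono quad_form_wtridiag_le c) (use assms in auto)
  then show ?thesis by (simp add: sum_lessThan_mult_blocks sum_distrib_left)
qed

lemma quad_form_A2_mat_le:
  assumes "0 < m2" "0 < V" "0 \<le> \<kappa>"
  shows "quad_form (A2_mat \<kappa> \<eta> V m1 m2) (m2 * m1) x \<le> \<kappa> / 2 * (\<Sum>p<m2 * m1. (x p)\<^sup>2)"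
proof -
  obtain c where c: "\<And>i. c i - c (Suc i) = 1/2"
    and q: "\<And>x. quad_form (A2_mat \<kappa> \<eta> V m1 m2) (m2 * m1) x
           = \<kappa> * (\<Sum>i<m1. quad_form (wtridiag m2 c) m2 (\<lambda>a. x (a * m1 + i)))"
    using quad_form_A2_mat[OF assms(2)] by blast
  have "quad_form (A2_mat \<kappa> \<eta> V m1 m2) (m2 * m1) x \<le> \<kappa> * (\<Sum>i<m1. \<bar>1/2\<bar> * (\<Sum>a<m2. (x (a * m1 + i))\<^sup>2))"
    unfolding q by (intro mult_left_mono sum_mono quad_form_wtridiag_le c) (use assms in auto)
  then show ?thesis
    by (simp add: sum_lessThan_mult_blocks sum_distrib_left sum.swap[of _ "{..<m1}"])
qed

lemma quad_form_A1_mat_alternating: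
  assumes "0 < m1" "L < S"
  shows "quad_form (A1_mat r L S m1 m2) (m2 * m1) (\<lambda>p. (-1) ^ (p mod m1))
    = r * real m2 * real (m1 - 1) / 2"
proof -
  obtain c where c: "\<And>i. c i - c (Suc i) = - 1/2"
    and q: "\<And>x. quad_form (A1_mat r L S m1 m2) (m2 * m1) x
           = r * (\<Sum>a<m2. quad_form (wtridiag m1 c) m1 (\<lambda>i. x (a * m1 + i)))"
    using quad_form_A1_mat[OF assms(2)] by blast
  have "quad_form (wtridiag m1 c) m1 (\<lambda>i. (-1) ^ ((a * m1 + i) mod m1)) = real (m1 - 1) / 2" for a
    by (subst quad_form_cong[where y = "\<lambda>i. (-1) ^ i"])
       (simp_all add: quad_form_wtridiag_alternating[of c, OF c assms(1)])
  then show ?thesis unfolding q by simp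
qed

lemma quad_form_A2_mat_const:
  assumes "0 < m2" "0 < V"
  shows "quad_form (A2_mat \<kappa> \<eta> V m1 m2) (m2 * m1) (\<lambda>p. 1) = \<kappa> * real m1 * real (m2 - 1) / 2"
proof -
  obtain c where c: "\<And>i. c i - c (Suc i) = 1/2"
    and q: "\<And>x. quad_form (A2_mat \<kappa> \<eta> V m1 m2) (m2 * m1) x
           = \<kappa> * (\<Sum>i<m1. quad_form (wtridiag m2 c) m2 (\<lambda>a. x (a * m1 + i)))"
    using quad_form_A2_mat[OF assms(2)] by blast
  show ?thesis unfolding q by (simp add: quad_form_wtridiag_const[of c, OF c assms(1)])
qed

lemma exists_nat_ratio_gt:
  fixes c \<omega> :: real
  assumes "\<omega> < c / 2"
  shows "\<exists>m::nat. m \<ge> 3 \<and> c * real (m - 1) / 2 > \<omega> * real m"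
proof -
  define m where "m = nat \<lceil>c / (c - 2 * \<omega>)\<rceil> + 3"
  have pos: "c - 2 * \<omega> > 0" using assms by simp
  have "c / (c - 2 * \<omega>) < real m"
    unfolding m_def using real_nat_ceiling_ge[of "c / (c - 2 * \<omega>)"] by simp
  then have "c < real m * (c - 2 * \<omega>)" using pos by (simp add: pos_divide_less_eq)
  moreover have "real (m - 1) = real m - 1" unfolding m_def by simp
  ultimately show ?thesis by (intro exI[of _ m]) (simp_all add: m_def algebra_simps)
qed

lemma spec_norm_mat_exp_A1_mat_le:
  assumes "0 \<le> r" "L < S" "0 < m1" "0 < m2" "0 \<le> t"
  shows "spec_norm (mat_exp (t \<cdot>\<^sub>m A1_mat r L S m1 m2)) \<le> exp (t * r / 2)"
  using spec_norm_mat_exp_le[OF A1_mat_carrier _ quad_form_A1_mat_le assms(5)] assms by simp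

lemma spec_norm_mat_exp_A2_mat_le:
  assumes "0 \<le> \<kappa>" "0 < V" "0 < m1" "0 < m2" "0 \<le> t"
  shows "spec_norm (mat_exp (t \<cdot>\<^sub>m A2_mat \<kappa> \<eta> V m1 m2)) \<le> exp (t * \<kappa> / 2)"
  using spec_norm_mat_exp_le[OF A2_mat_carrier _ quad_form_A2_mat_le assms(5)] assms by simp

lemma A1_mat_growth_sharp:
  assumes "r > 0" "L < S" "\<omega> < r / 2"
  shows "\<exists>m1 m2 (t::real). m1 \<ge> 3 \<and> m2 \<ge> 3 \<and> t \<ge> 0 \<and>
           \<not> spec_norm (mat_exp (t \<cdot>\<^sub>m A1_mat r L S m1 m2)) \<le> exp (t * \<omega>)"
proof -
  obtain m1 :: nat where m1: "m1 \<ge> 3" and gt: "r * real (m1 - 1) / 2 > \<omega> * real m1"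
    using exists_nat_ratio_gt[OF assms(3)] by blast
  have sign: "((-1::real) ^ (p mod m1))\<^sup>2 = 1" for p
    by (simp add: power2_eq_square flip: power_mult_distrib)
  have range: "quad_form (A1_mat r L S m1 3) (3 * m1) y \<le> r / 2 * (\<Sum>p<3 * m1. (y p)\<^sup>2)" for y
    using quad_form_A1_mat_le[of m1 L S r 3 y] m1 assms by simp
  have "quad_form (A1_mat r L S m1 3) (3 * m1) (\<lambda>p. (-1) ^ (p mod m1)) > \<omega> * real (3 * m1)"
    using gt m1 assms by (simp add: quad_form_A1_mat_alternating)
  then have "\<exists>t\<ge>0. \<not> spec_norm (mat_exp (t \<cdot>\<^sub>m A1_mat r L S m1 3)) \<le> exp (t * \<omega>)"
    using not_spec_norm_mat_exp_le_sign_vector[OF A1_mat_carrier _ range sign] m1 by simp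
  then show ?thesis using m1 by blast
qed

lemma A2_mat_growth_sharp:
  assumes "\<kappa> > 0" "V > 0" "\<omega> < \<kappa> / 2"
  shows "\<exists>m1 m2 (t::real). m1 \<ge> 3 \<and> m2 \<ge> 3 \<and> t \<ge> 0 \<and>
           \<not> spec_norm (mat_exp (t \<cdot>\<^sub>m A2_mat \<kappa> \<eta> V m1 m2)) \<le> exp (t * \<omega>)"
proof -
  obtain m2 :: nat where m2: "m2 \<ge> 3" and gt: "\<kappa> * real (m2 - 1) / 2 > \<omega> * real m2"
    using exists_nat_ratio_gt[OF assms(3)] by blast
  have range: "quad_form (A2_mat \<kappa> \<eta> V 3 m2) (m2 * 3) y \<le> \<kappa> / 2 * (\<Sum>p<m2 * 3. (y p)\<^sup>2)" for y
    using quad_form_A2_mat_le[of m2 V \<kappa> \<eta> 3 y] m2 assms by simp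
  have "quad_form (A2_mat \<kappa> \<eta> V 3 m2) (m2 * 3) (\<lambda>p. 1) > \<omega> * real (m2 * 3)"
    using gt m2 assms by (simp add: quad_form_A2_mat_const)
  then have "\<exists>t\<ge>0. \<not> spec_norm (mat_exp (t \<cdot>\<^sub>m A2_mat \<kappa> \<eta> V 3 m2)) \<le> exp (t * \<omega>)"
    using not_spec_norm_mat_exp_le_sign_vector[OF A2_mat_carrier _ range, of "\<lambda>p. 1"] m2 by simp
  then show ?thesis using m2 by blast
qed

theorem theorem2p1:
  fixes r \<kappa> \<eta> L S V :: real
  assumes "r > 0" "\<kappa> > 0" "\<eta> > 0" "L \<ge> 0" "S > L" "V > 0"
  shows "(\<forall>m1 m2 (t::real). m1 \<ge> 3 \<and> m2 \<ge> 3 \<and> t \<ge> 0 \<longrightarrow>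
            spec_norm (mat_exp (t \<cdot>\<^sub>m A1_mat r L S m1 m2)) \<le> exp (t * r / 2)) \<and>
         (\<forall>m1 m2 (t::real). m1 \<ge> 3 \<and> m2 \<ge> 3 \<and> t \<ge> 0 \<longrightarrow>
            spec_norm (mat_exp (t \<cdot>\<^sub>m A2_mat \<kappa> \<eta> V m1 m2)) \<le> exp (t * \<kappa> / 2)) \<and>
         (\<forall>\<omega>::real. \<omega> < r / 2 \<longrightarrow> (\<exists>m1 m2 (t::real). m1 \<ge> 3 \<and> m2 \<ge> 3 \<and> t \<ge> 0 \<and>
            \<not> spec_norm (mat_exp (t \<cdot>\<^sub>m A1_mat r L S m1 m2)) \<le> exp (t * \<omega>))) \<and>
         (\<forall>\<omega>::real. \<omega> < \<kappa> / 2 \<longrightarrow> (\<exists>m1 m2 (t::real). m1 \<ge> 3 \<and> m2 \<ge> 3 \<and> t \<ge> 0 \<and>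
            \<not> spec_norm (mat_exp (t \<cdot>\<^sub>m A2_mat \<kappa> \<eta> V m1 m2)) \<le> exp (t * \<omega>)))"
proof (intro conjI allI impI)
  fix m1 m2 :: nat and t :: real
  assume "m1 \<ge> 3 \<and> m2 \<ge> 3 \<and> t \<ge> 0"
  then show "spec_norm (mat_exp (t \<cdot>\<^sub>m A1_mat r L S m1 m2)) \<le> exp (t * r / 2)"
    and "spec_norm (mat_exp (t \<cdot>\<^sub>m A2_mat \<kappa> \<eta> V m1 m2)) \<le> exp (t * \<kappa> / 2)"
    using spec_norm_mat_exp_A1_mat_le[of r L S m1 m2 t] spec_norm_mat_exp_A2_mat_le[of \<kappa> V m1 m2 t \<eta>]
      assms by auto
qed (use A1_mat_growth_sharp[OF assms(1,5)] A2_mat_growth_sharp[OF assms(2,6)] in blast)+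

end
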